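(* Let $M\in\Gamma$ be a monitor, $N$ a malicious node, $C$ a malicious node colluding with $N$, and $P$ an honest outbound peer of $C$ that is not connected to $N$. If $M$ executes $PeeV(N)$, $N$ forwards the marker it receives from $M$ to $C$, and $C$ forwards it to $P$, then when $PeeV(N)$ ends, $P\notin L_N^M$.
   Context: The network is a directed graph $G=(V,E)$ of nodes; $(X,Y)\in E$ means $X$ has an outbound connection to $Y$, so $Y$ is an outbound peer of $X$ and $X$ is an inbound peer of $Y$. $\Gamma$ is a set of legitimate monitors, each connected to every node. A marker is a triple $[N,M,r]$ (target, monitor, random value). $PeeV(N)$, run by $M$: start with empty $L_N^M$; draw random $r$; send $[N,M,r]$ to $N$; until a timeout, whenever a marker equal to $[N,M,r]$ is received from a node $P$, add $P$ to $L_N^M$; then output $L_N^M$. An honest node $X$ processes every received marker with $HandleMarker(pfrom,[N,M,r])$: if $pfrom=M\in\Gamma$, forward the marker to all outbound peers of $X$; if $pfrom=N$ and $N$ is an inbound peer of $X$, send the marker to $M$; otherwise do nothing. Malicious nodes may deviate arbitrarily and may cooperate with each other. *)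

theory Defs
  imports Main
begin

text \<open>A marker [N,M,r]: (target, monitor, random value).\<close>
type_synonym ('a,'r) marker = "'a \<times> 'a \<times> 'r"

text \<open>A message sent during a run: (sender, receiver, marker).  The sender field is
  the true sender (authenticated connections).\<close>
type_synonym ('a,'r) msg = "'a \<times> 'a \<times> ('a,'r) marker"

fun handle_marker ::
  "'a set \<Rightarrow> ('a \<times> 'a) set \<Rightarrow> 'a \<Rightarrow> 'a \<Rightarrow> ('a,'r) marker \<Rightarrow> ('a \<times> ('a,'r) marker) set"
where
  "handle_marker \<Gamma> E X pfrom (N, M, r) =
     (if pfrom = M \<and> M \<in> \<Gamma> then {(Y, (N, M, r)) | Y. (X, Y) \<in> E}
      else if pfrom = N \<and> (N, X) \<in> E then {(M, (N, M, r))}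
      else {})"

text \<open>A run of the network up to the PeeV timeout, given as the list of all messages
  sent, in chronological order.
  Malicious nodes (V - H) are unconstrained (arbitrary, cooperating behaviour).\<close>
definition valid_run ::
  "'a set \<Rightarrow> 'a set \<Rightarrow> ('a \<times> 'a) set \<Rightarrow> 'a set \<Rightarrow> ('a,'r) msg list \<Rightarrow> bool"
where
  "valid_run \<Gamma> V E H tr \<longleftrightarrow>
     (\<forall>i < length tr. case tr ! i of (s, d, mk) \<Rightarrow>
        ((s, d) \<in> E \<or> (d, s) \<in> E \<or> (s \<in> \<Gamma> \<and> d \<in> V) \<or> (d \<in> \<Gamma> \<and> s \<in> V))
      \<and> (s \<in> \<Gamma> \<longrightarrow> (\<exists>r. mk = (d, s, r)))
      \<and> (s \<in> H \<longrightarrow> (\<exists>j < i. \<exists>p mk'. tr ! j = (p, s, mk') \<and>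
                                     (d, mk) \<in> handle_marker \<Gamma> E s p mk')))"

definition peev_list :: "'a \<Rightarrow> 'a \<Rightarrow> 'r \<Rightarrow> ('a,'r) msg list \<Rightarrow> 'a set" where
  "peev_list M N r tr = {P. (P, M, (N, M, r)) \<in> set tr}"

end

theory Submission
  imports Defs
begin

text \<open>An honest node reports a marker [N,M,r] to the monitor M only from inside
  HandleMarker, and there only in the branch where the marker came from N over an
  inbound connection, because a monitor is never an outbound peer of a node.  Hence
  the node P that is not connected to N never reports, whatever the malicious nodes
  N and C forward to it.\<close>

lemma handle_marker_to_non_peer:
  assumes "(M, (N, M, r)) \<in> handle_marker \<Gamma> E X p mk" and "(X, M) \<notin> E"
  shows "p = N \<and> (N, X) \<in> E \<and> mk = (N, M, r)"
proof -
  obtain N' M' r' where "mk = (N', M', r')" by (cases mk) auto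
  with assms show ?thesis by (auto split: if_splits)
qed

lemma valid_run_honest_send:
  assumes "valid_run \<Gamma> V E H tr" and "X \<in> H" and "(X, d, mk) \<in> set tr"
  obtains p mk' where "(p, X, mk') \<in> set tr" and "(d, mk) \<in> handle_marker \<Gamma> E X p mk'"
proof -
  obtain i where "i < length tr" and "tr ! i = (X, d, mk)"
    using assms(3) by (metis in_set_conv_nth)
  with assms(1,2) obtain j p mk' where "j < i" and "tr ! j = (p, X, mk')"
      and "(d, mk) \<in> handle_marker \<Gamma> E X p mk'"
    unfolding valid_run_def by fastforce
  moreover from \<open>j < i\<close> \<open>i < length tr\<close> have "tr ! j \<in> set tr" by simp
  ultimately show thesis using that by simp
qed

lemma valid_run_honest_report_from_inbound_target:
  assumes "valid_run \<Gamma> V E H tr" and "E \<subseteq> V \<times> V" and "M \<notin> V"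
    and "X \<in> H" and "(X, M, (N, M, r)) \<in> set tr"
  shows "(N, X) \<in> E"
proof -
  obtain p mk where sent: "(M, (N, M, r)) \<in> handle_marker \<Gamma> E X p mk"
    using assms(1,4,5) by (rule valid_run_honest_send)
  have "(X, M) \<notin> E" using assms(2,3) by blast
  with handle_marker_to_non_peer[OF sent] show ?thesis by simp
qed

theorem lemma2:
  fixes \<Gamma> V H :: "'a set" and E :: "('a \<times> 'a) set"
    and tr :: "('a,'r) msg list" and M N C P :: 'a and r :: 'r
  assumes "E \<subseteq> V \<times> V" and "\<Gamma> \<inter> V = {}" and "H \<subseteq> V"
    and "valid_run \<Gamma> V E H tr"
    and "M \<in> \<Gamma>"
    and "N \<in> V" and "N \<notin> H"
    and "C \<in> V" and "C \<notin> H"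
    and "P \<in> H" and "(C, P) \<in> E"
    and "(N, P) \<notin> E" and "(P, N) \<notin> E"
    and "(M, N, (N, M, r)) \<in> set tr"
    and "(N, C, (N, M, r)) \<in> set tr"
    and "(C, P, (N, M, r)) \<in> set tr"
  shows "P \<notin> peev_list M N r tr"
proof
  have "M \<notin> V" using assms(2,5) by blast
  moreover assume "P \<in> peev_list M N r tr"
  then have "(P, M, (N, M, r)) \<in> set tr" by (simp add: peev_list_def)
  ultimately have "(N, P) \<in> E"
    by (rule valid_run_honest_report_from_inbound_target[OF assms(4,1) _ assms(10)])
  with assms(12) show False by contradiction
qed

end
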